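(* The three families of test equations for nilpotent algebra presentations are irredundant: for each $t\in\{1,2,3\}$ there exists a nilpotent presentation over $\mathbb Z$ for which some test equation of type (T$t$) fails while all test equations of the other two types hold, where, with $w$ the weight function and $d=\max_iw(a_i)$, the types are (T1) $c(a_k\,c(a_ja_i))=c(c(a_ka_j)\,a_i)$ for $w(a_k)+w(a_j)+w(a_i)\le d$; (T2) $c(r_j\,c(a_ja_i))=c(c(r_ja_j)\,a_i)$ for $r_j<\infty$, $w(a_j)+w(a_i)\le d$; (T3) $c(r_i\,c(a_ja_i))=c(a_j\,c(r_ia_i))$ for $r_i<\infty$, $w(a_j)+w(a_i)\le d$. In particular, no proper subset of these families suffices to detect inconsistency in general.
   Context: $R$ is a field or $\mathbb Z$; algebras are associative, not necessarily unital. A nilpotent presentation over $R$ on generators $a_1,\ldots,a_n$ consists of $r_1,\ldots,r_n\in\mathbb N\cup\{\infty\}$ (all $\infty$ when $R$ is a field) and $e_{i,k},b_{i,j,k}\in R$ with $0\le e_{i,k},b_{i,j,k}<r_k$ when $r_k<\infty$, with defining relations $r_ia_i=\sum_{k>i}e_{i,k}a_k$ (for $r_i<\infty$) and $a_ja_i=\sum_{k>\max\{i,j\}}b_{i,j,k}a_k$ for all $1\le i,j\le n$. $F$ is the free associative $R$-algebra on $a_1,\ldots,a_n$ and $I$ the ideal generated by the differences of the two sides of the relations; the presented algebra is $F/I$. A reduced form is $x_1a_1+\cdots+x_na_n$ with $x_i\in R$, $0\le x_i<r_i$ when $r_i<\infty$. The collection function $c\colon F\to F$ maps each element to a reduced form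 congruent to it modulo $I$, computed by the collection algorithm (using linearity, rewriting products $a_ja_i$ by the right-hand sides of the product relations, and reducing coefficients via the relations $r_ia_i=\ldots$). The presentation is consistent if every element of $F/I$ has exactly one reduced form. The weight function $w$ is the pointwise minimal function $\{a_1,\ldots,a_n\}\to\mathbb N$ with $w(a_k)\ge w(a_i)$ when $e_{i,k}\ne0$ and $w(a_k)\ge w(a_i)+w(a_j)$ when $b_{i,j,k}\ne0$. *)

theory Defs
  imports Main
begin

text \<open>Generators a_1,...,a_n are
  indexed by 0,...,n-1.  ord P i = None means r_i = infinity, ord P i = Some r means r_i = r.
  ecoef P i k is e_{i,k}; bcoef P i j k is b_{i,j,k}, i.e. a_j a_i = sum_k b_{i,j,k} a_k.
  Elements of F that are linear combinations of generators are represented by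
  coefficient functions nat => int (supported on indices below n).\<close>

record npres =
  gens :: nat
  ord :: "nat \<Rightarrow> nat option"
  ecoef :: "nat \<Rightarrow> nat \<Rightarrow> int"
  bcoef :: "nat \<Rightarrow> nat \<Rightarrow> nat \<Rightarrow> int"

definition nil_pres :: "npres \<Rightarrow> bool" where
  "nil_pres P \<longleftrightarrow>
     (\<forall>i<gens P. \<forall>r. ord P i = Some r \<longrightarrow> 0 < r) \<and>
     (\<forall>i k. ecoef P i k \<noteq> 0 \<longrightarrow> i < k \<and> k < gens P \<and> ord P i \<noteq> None) \<and>
     (\<forall>i j k. bcoef P i j k \<noteq> 0 \<longrightarrow> i < k \<and> j < k \<and> k < gens P) \<and>
     (\<forall>k<gens P. \<forall>r. ord P k = Some r \<longrightarrow>
        (\<forall>i. 0 \<le> ecoef P i k \<and> ecoef P i k < int r) \<and>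
        (\<forall>i j. 0 \<le> bcoef P i j k \<and> bcoef P i j k < int r))"

definition gen :: "nat \<Rightarrow> nat \<Rightarrow> int" where
  "gen i = (\<lambda>k. if k = i then 1 else 0)"

definition smul :: "int \<Rightarrow> (nat \<Rightarrow> int) \<Rightarrow> nat \<Rightarrow> int" where
  "smul z u = (\<lambda>k. z * u k)"

definition pmult :: "npres \<Rightarrow> (nat \<Rightarrow> int) \<Rightarrow> (nat \<Rightarrow> int) \<Rightarrow> nat \<Rightarrow> int" where
  "pmult P u v = (\<lambda>k. \<Sum>l<gens P. \<Sum>m<gens P. u l * v m * bcoef P m l k)"

text \<open>Coefficient reduction at index i via r_i a_i = sum_{k>i} e_{i,k} a_k.\<close>

definition red_step :: "npres \<Rightarrow> (nat \<Rightarrow> int) \<Rightarrow> nat \<Rightarrow> nat \<Rightarrow> int" where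
  "red_step P x i = (case ord P i of
      None \<Rightarrow> x
    | Some r \<Rightarrow> (\<lambda>k. if k = i then x i mod int r
                     else if i < k then x k + (x i div int r) * ecoef P i k
                     else x k))"

definition collect :: "npres \<Rightarrow> (nat \<Rightarrow> int) \<Rightarrow> nat \<Rightarrow> int" where
  "collect P x = foldl (red_step P) x [0..<gens P]"

definition is_weight :: "npres \<Rightarrow> (nat \<Rightarrow> nat) \<Rightarrow> bool" where
  "is_weight P w \<longleftrightarrow>
     (\<forall>k<gens P. 1 \<le> w k) \<and> (\<forall>k. gens P \<le> k \<longrightarrow> w k = 0) \<and>
     (\<forall>i<gens P. \<forall>k<gens P. ecoef P i k \<noteq> 0 \<longrightarrow> w i \<le> w k) \<and>
     (\<forall>i<gens P. \<forall>j<gens P. \<forall>k<gens P. bcoef P i j k \<noteq> 0 \<longrightarrow> w i + w j \<le> w k)"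

definition weight :: "npres \<Rightarrow> nat \<Rightarrow> nat" where
  "weight P = (THE w. is_weight P w \<and> (\<forall>w'. is_weight P w' \<longrightarrow> (\<forall>k<gens P. w k \<le> w' k)))"

definition maxweight :: "npres \<Rightarrow> nat" where
  "maxweight P = Max (weight P ` {..<gens P})"

definition eq_on :: "npres \<Rightarrow> (nat \<Rightarrow> int) \<Rightarrow> (nat \<Rightarrow> int) \<Rightarrow> bool" where
  "eq_on P x y \<longleftrightarrow> (\<forall>k<gens P. x k = y k)"

definition tests_T1 :: "npres \<Rightarrow> bool" where
  "tests_T1 P \<longleftrightarrow> (\<forall>i<gens P. \<forall>j<gens P. \<forall>k<gens P.
     weight P k + weight P j + weight P i \<le> maxweight P \<longrightarrow>
     eq_on P (collect P (pmult P (gen k) (collect P (pmult P (gen j) (gen i)))))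
             (collect P (pmult P (collect P (pmult P (gen k) (gen j))) (gen i))))"

definition tests_T2 :: "npres \<Rightarrow> bool" where
  "tests_T2 P \<longleftrightarrow> (\<forall>i<gens P. \<forall>j<gens P. \<forall>r. ord P j = Some r \<longrightarrow>
     weight P j + weight P i \<le> maxweight P \<longrightarrow>
     eq_on P (collect P (smul (int r) (collect P (pmult P (gen j) (gen i)))))
             (collect P (pmult P (collect P (smul (int r) (gen j))) (gen i))))"

definition tests_T3 :: "npres \<Rightarrow> bool" where
  "tests_T3 P \<longleftrightarrow> (\<forall>i<gens P. \<forall>j<gens P. \<forall>r. ord P i = Some r \<longrightarrow>
     weight P j + weight P i \<le> maxweight P \<longrightarrow>
     eq_on P (collect P (smul (int r) (collect P (pmult P (gen j) (gen i)))))
             (collect P (pmult P (gen j) (collect P (smul (int r) (gen i))))))"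

definition tests :: "nat \<Rightarrow> npres \<Rightarrow> bool" where
  "tests t P = (if t = 1 then tests_T1 P else if t = 2 then tests_T2 P else tests_T3 P)"

end

theory Submission
  imports Defs
begin

text \<open>Each family is witnessed by a presentation on three generators a_1, a_2, a_3
  (indices 0, 1, 2 in the code).  With a_1 a_1 = a_2, a_1 a_2 = a_3 and no torsion,
  the multiplication is not associative: (T1) fails at a_1 a_1 a_1, while (T2) and (T3)
  are vacuous.  With 2 a_1 = a_2, 2 a_3 = 0 and the single product a_2 a_1 = a_3 we get
  c(2 c(a_1 a_1)) = 0 but c(c(2 a_1) a_1) = c(a_2 a_1) = a_3, so (T2) fails; the mirrored
  product a_1 a_2 = a_3 makes (T3) fail in the same way.  In these two presentations the
  weights are 1, 1, 2, so no instance of (T1) is in range, and the remaining family holds by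
  direct computation.\<close>

lemma weight_eqI:
  assumes "is_weight P w" and "\<And>w'. is_weight P w' \<Longrightarrow> \<forall>k<gens P. w k \<le> w' k"
  shows "weight P = w"
  unfolding weight_def
proof (rule the_equality)
  show "is_weight P w \<and> (\<forall>w'. is_weight P w' \<longrightarrow> (\<forall>k<gens P. w k \<le> w' k))"
    using assms by blast
next
  fix v
  assume v: "is_weight P v \<and> (\<forall>w'. is_weight P w' \<longrightarrow> (\<forall>k<gens P. v k \<le> w' k))"
  show "v = w"
  proof
    fix k
    show "v k = w k"
    proof (cases "k < gens P")
      case True
      then show ?thesis using v assms by (meson le_antisym)
    next
      case False
      then show ?thesis using v assms(1) unfolding is_weight_def by simp
    qed
  qed
qed

lemma red_step_reduced:
  assumes "\<And>r. ord P i = Some r \<Longrightarrow> 0 \<le> x i \<and> x i < int r"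
  shows "red_step P x i = x"
  using assms by (auto simp: red_step_def fun_eq_iff split: option.split)

lemma collect_reduced:
  assumes "\<And>i r. i < gens P \<Longrightarrow> ord P i = Some r \<Longrightarrow> 0 \<le> x i \<and> x i < int r"
  shows "collect P x = x"
proof -
  have "foldl (red_step P) x ns = x" if "set ns \<subseteq> {..<gens P}" for ns
    using that by (induction ns) (auto simp: red_step_reduced assms)
  then show ?thesis
    unfolding collect_def by (simp add: lessThan_atLeast0)
qed

lemma gen_mult: "gen i k * y = (if k = i then y else 0)"
  by (simp add: gen_def)

lemma pmult_eq: "pmult P u v k = (\<Sum>l<gens P. u l * (\<Sum>m<gens P. v m * bcoef P m l k))"
  by (simp add: pmult_def sum_distrib_left mult.assoc)

lemma pmult_gen_gen:
  assumes "i < gens P" and "j < gens P"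
  shows "pmult P (gen j) (gen i) = bcoef P i j"
  using assms by (simp add: fun_eq_iff pmult_eq gen_mult)

definition single_product :: "nat \<Rightarrow> nat \<Rightarrow> nat \<Rightarrow> nat \<Rightarrow> nat \<Rightarrow> nat \<Rightarrow> int" where
  "single_product i j k = (\<lambda>i' j' k'. of_bool (i' = i \<and> j' = j \<and> k' = k))"

lemma pmult_single_product:
  assumes "bcoef P = single_product i j k" and "i < gens P" and "j < gens P"
  shows "pmult P u v = (\<lambda>k'. if k' = k then u j * v i else 0)"
proof
  fix k'
  have "u l * (\<Sum>m<gens P. v m * bcoef P m l k') = (if l = j \<and> k' = k then u j * v i else 0)"
    for l
    using assms by (cases "l = j \<and> k' = k") (auto simp: single_product_def)
  then have "pmult P u v k' = (\<Sum>l<gens P. if l = j \<and> k' = k then u j * v i else 0)"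
    by (simp only: pmult_eq)
  then show "pmult P u v k' = (if k' = k then u j * v i else 0)"
    using assms by (cases "k' = k") simp_all
qed

lemma tests_T1_if_maxweight_lt_3:
  assumes "\<And>k. k < gens P \<Longrightarrow> 1 \<le> weight P k" and "maxweight P < 3"
  shows "tests_T1 P"
proof -
  have "\<not> weight P k + weight P j + weight P i \<le> maxweight P"
    if "i < gens P" "j < gens P" "k < gens P" for i j k
    using assms(1)[OF that(1)] assms(1)[OF that(2)] assms(1)[OF that(3)] assms(2) by linarith
  then show ?thesis
    unfolding tests_T1_def by blast
qed

lemma tests_T2_torsion_free: "(\<And>j. j < gens P \<Longrightarrow> ord P j = None) \<Longrightarrow> tests_T2 P"
  by (simp add: tests_T2_def)

lemma tests_T3_torsion_free: "(\<And>i. i < gens P \<Longrightarrow> ord P i = None) \<Longrightarrow> tests_T3 P"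
  by (simp add: tests_T3_def)

definition nonassoc_pres :: npres where
  "nonassoc_pres = \<lparr>gens = 3, ord = (\<lambda>_. None), ecoef = (\<lambda>_ _. 0),
     bcoef = (\<lambda>i j k. single_product 0 0 1 i j k + single_product 1 0 2 i j k)\<rparr>"

lemma nil_pres_nonassoc_pres: "nil_pres nonassoc_pres"
  by (simp add: nil_pres_def nonassoc_pres_def single_product_def)

lemma weight_nonassoc_pres: "weight nonassoc_pres = (\<lambda>k. if k < 3 then k + 1 else 0)"
proof (rule weight_eqI)
  show "is_weight nonassoc_pres (\<lambda>k. if k < 3 then k + 1 else 0)"
    by (auto simp: is_weight_def nonassoc_pres_def single_product_def)
next
  fix w
  assume "is_weight nonassoc_pres w"
  then have "1 \<le> w 0" "w 0 + w 0 \<le> w 1" "w 1 + w 0 \<le> w 2"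
    by (simp_all add: is_weight_def nonassoc_pres_def single_product_def)
  then show "\<forall>k<gens nonassoc_pres. (if k < 3 then k + 1 else 0) \<le> w k"
    by (auto simp: nonassoc_pres_def eval_nat_numeral less_Suc_eq)
qed

lemma maxweight_nonassoc_pres: "maxweight nonassoc_pres = 3"
  unfolding maxweight_def weight_nonassoc_pres
  by (simp add: nonassoc_pres_def eval_nat_numeral lessThan_Suc)

lemma not_tests_T1_nonassoc_pres: "\<not> tests_T1 nonassoc_pres"
proof
  let ?P = nonassoc_pres
  have collect_id: "collect ?P x = x" for x
    by (rule collect_reduced) (simp add: nonassoc_pres_def)
  have "pmult ?P (gen 0) (gen 0) = gen 1" "pmult ?P (gen 0) (gen 1) = gen 2"
    "pmult ?P (gen 1) (gen 0) = (\<lambda>_. 0)"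
    by (subst pmult_gen_gen; simp add: nonassoc_pres_def single_product_def gen_def fun_eq_iff)+
  moreover assume "tests_T1 ?P"
  ultimately have "eq_on ?P (gen 2) (\<lambda>_. 0)"
    unfolding tests_T1_def collect_id weight_nonassoc_pres maxweight_nonassoc_pres
    by (auto simp: nonassoc_pres_def)
  then have "gen 2 2 = (0::int)"
    by (simp add: eq_on_def nonassoc_pres_def)
  then show False
    by (simp add: gen_def)
qed

definition mod2_pres :: "(nat \<Rightarrow> nat \<Rightarrow> nat \<Rightarrow> int) \<Rightarrow> npres" where
  "mod2_pres b = \<lparr>gens = 3, ord = (\<lambda>i. if i = 0 \<or> i = 2 then Some 2 else None),
     ecoef = (\<lambda>i k. of_bool (i = 0 \<and> k = 1)), bcoef = b\<rparr>"

lemma gens_mod2_pres [simp]: "gens (mod2_pres b) = 3"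
  by (simp add: mod2_pres_def)

lemma ord_mod2_pres: "ord (mod2_pres b) i = (if i = 0 \<or> i = 2 then Some 2 else None)"
  by (simp add: mod2_pres_def)

lemma nil_pres_mod2_pres: "i < 2 \<Longrightarrow> j < 2 \<Longrightarrow> nil_pres (mod2_pres (single_product i j 2))"
  by (simp add: nil_pres_def mod2_pres_def single_product_def)

lemma collect_mod2_pres:
  "collect (mod2_pres b) x =
     (\<lambda>k. if k = 0 then x 0 mod 2 else if k = 1 then x 1 + x 0 div 2
          else if k = 2 then x 2 mod 2 else x k)"
  by (auto simp: collect_def mod2_pres_def red_step_def upt_rec numeral_2_eq_2 fun_eq_iff)

lemma weight_mod2_pres:
  assumes "{i, j} = {0, 1}"
  shows "weight (mod2_pres (single_product i j 2)) =
    (\<lambda>k. if k < 2 then 1 else if k = 2 then 2 else 0)"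
proof (rule weight_eqI)
  show "is_weight (mod2_pres (single_product i j 2))
    (\<lambda>k. if k < 2 then 1 else if k = 2 then 2 else 0)"
    using assms by (auto simp: is_weight_def mod2_pres_def single_product_def doubleton_eq_iff)
next
  fix w
  assume "is_weight (mod2_pres (single_product i j 2)) w"
  then have "1 \<le> w 0" "1 \<le> w 1" "w i + w j \<le> w 2"
    using assms by (auto simp: is_weight_def mod2_pres_def single_product_def doubleton_eq_iff)
  then show "\<forall>k<gens (mod2_pres (single_product i j 2)).
    (if k < 2 then 1 else if k = 2 then 2 else 0) \<le> w k"
    using assms by (auto simp: eval_nat_numeral less_Suc_eq doubleton_eq_iff)
qed

lemma maxweight_mod2_pres: "{i, j} = {0, 1} \<Longrightarrow> maxweight (mod2_pres (single_product i j 2)) = 2"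
  unfolding maxweight_def by (subst weight_mod2_pres) (simp_all add: eval_nat_numeral lessThan_Suc)

lemma tests_T1_mod2_pres: "{i, j} = {0, 1} \<Longrightarrow> tests_T1 (mod2_pres (single_product i j 2))"
  by (rule tests_T1_if_maxweight_lt_3) (simp_all add: weight_mod2_pres maxweight_mod2_pres)

lemma pmult_mod2_pres:
  "i < 3 \<Longrightarrow> j < 3 \<Longrightarrow>
    pmult (mod2_pres (single_product i j k)) u v = (\<lambda>k'. if k' = k then u j * v i else 0)"
  by (rule pmult_single_product) (simp_all add: mod2_pres_def)

lemma collect_mod2_pres_double_gen0: "collect (mod2_pres b) (smul 2 (gen 0)) = gen 1"
  by (simp add: collect_mod2_pres smul_def gen_def fun_eq_iff)

lemma not_tests_T2_mod2_pres: "\<not> tests_T2 (mod2_pres (single_product 0 1 2))"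
proof
  let ?P = "mod2_pres (single_product 0 1 2)"
  have "ord ?P 0 = Some 2"
    by (simp add: ord_mod2_pres)
  moreover have "weight ?P 0 + weight ?P 0 \<le> maxweight ?P"
    using weight_mod2_pres[of 0 1] maxweight_mod2_pres[of 0 1] by simp
  moreover assume "tests_T2 ?P"
  ultimately have "eq_on ?P (collect ?P (smul 2 (collect ?P (pmult ?P (gen 0) (gen 0)))))
      (collect ?P (pmult ?P (collect ?P (smul 2 (gen 0))) (gen 0)))"
    unfolding tests_T2_def by force
  then have "collect ?P (smul 2 (collect ?P (pmult ?P (gen 0) (gen 0)))) 2
      = collect ?P (pmult ?P (gen 1) (gen 0)) 2"
    by (simp add: eq_on_def collect_mod2_pres_double_gen0)
  then show False
    by (simp add: pmult_mod2_pres collect_mod2_pres smul_def gen_def)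
qed

lemma not_tests_T3_mod2_pres: "\<not> tests_T3 (mod2_pres (single_product 1 0 2))"
proof
  let ?P = "mod2_pres (single_product 1 0 2)"
  have "ord ?P 0 = Some 2"
    by (simp add: ord_mod2_pres)
  moreover have "weight ?P 0 + weight ?P 0 \<le> maxweight ?P"
    using weight_mod2_pres[of 1 0] maxweight_mod2_pres[of 1 0] by (simp add: insert_commute)
  moreover assume "tests_T3 ?P"
  ultimately have "eq_on ?P (collect ?P (smul 2 (collect ?P (pmult ?P (gen 0) (gen 0)))))
      (collect ?P (pmult ?P (gen 0) (collect ?P (smul 2 (gen 0)))))"
    unfolding tests_T3_def by force
  then have "collect ?P (smul 2 (collect ?P (pmult ?P (gen 0) (gen 0)))) 2
      = collect ?P (pmult ?P (gen 0) (gen 1)) 2"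
    by (simp add: eq_on_def collect_mod2_pres_double_gen0)
  then show False
    by (simp add: pmult_mod2_pres collect_mod2_pres smul_def gen_def)
qed

lemma tests_T3_mod2_pres: "tests_T3 (mod2_pres (single_product 0 1 2))"
  unfolding tests_T3_def
  by (auto simp: eq_on_def pmult_mod2_pres collect_mod2_pres smul_def gen_def ord_mod2_pres)

lemma tests_T2_mod2_pres: "tests_T2 (mod2_pres (single_product 1 0 2))"
  unfolding tests_T2_def
  by (auto simp: eq_on_def pmult_mod2_pres collect_mod2_pres smul_def gen_def ord_mod2_pres)

theorem proposition27:
  shows "\<forall>t\<in>{1,2,3::nat}. \<exists>P. nil_pres P \<and> \<not> tests t P \<and>
           (\<forall>s\<in>{1,2,3::nat}. s \<noteq> t \<longrightarrow> tests s P)"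
proof -
  let ?P1 = nonassoc_pres
  let ?P2 = "mod2_pres (single_product 0 1 2)"
  let ?P3 = "mod2_pres (single_product 1 0 2)"
  have "tests_T2 ?P1" "tests_T3 ?P1"
    by (simp_all add: tests_T2_torsion_free tests_T3_torsion_free nonassoc_pres_def)
  then have "nil_pres ?P1 \<and> \<not> tests 1 ?P1 \<and> tests 2 ?P1 \<and> tests 3 ?P1"
    by (simp add: tests_def nil_pres_nonassoc_pres not_tests_T1_nonassoc_pres)
  moreover have "nil_pres ?P2 \<and> \<not> tests 2 ?P2 \<and> tests 1 ?P2 \<and> tests 3 ?P2"
    using nil_pres_mod2_pres[of 0 1] not_tests_T2_mod2_pres tests_T1_mod2_pres[of 0 1]
      tests_T3_mod2_pres by (simp add: tests_def)
  moreover have "nil_pres ?P3 \<and> \<not> tests 3 ?P3 \<and> tests 1 ?P3 \<and> tests 2 ?P3"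
    using nil_pres_mod2_pres[of 1 0] not_tests_T3_mod2_pres tests_T1_mod2_pres[of 1 0]
      tests_T2_mod2_pres by (simp add: tests_def insert_commute)
  ultimately show ?thesis
    by blast
qed

end
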